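(* Let $\epsilon\in(0,1)$, $u_0\in\mathbb{R}$, $h>0$, and let $(u_n)_{n\ge0}$ be a sequence of real numbers starting at $u_0$ and satisfying the implicit midpoint scheme $$\frac{u_n-u_{n-1}}{h}+\frac{1}{\epsilon^2}f\!\left(\frac{u_n+u_{n-1}}{2}\right)=0,\qquad n\ge1,\quad f(u)=u^3-u.$$ (i) If $u_0\in\{0,1,-1\}$ and $h\le2\epsilon^2$, then $u_n=\mathrm{sign}(u_0)$ for all $n\ge1$. (ii) If $u_0\notin\{0,1,-1\}$, define $h^*=h^*(u_0,\epsilon)=\frac{8\epsilon^2}{u_0^2+4|u_0|+3}$ if $|u_0|>1$ and $h^*=\epsilon^2$ if $0<|u_0|<1$. Then $h^*>0$ and for every $h\in(0,h^*]$ the sequence $(u_n)$ is monotone and converges to $\mathrm{sign}(u_0)$ as $n\to\infty$.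
   Context: The scheme discretizes the ODE $u'(t)+\frac{1}{\epsilon^2}(u^3-u)=0$, $u(0)=u_0$. For $h\le2\epsilon^2$ each step equation has a unique real solution. Here $\mathrm{sign}(0)=0$. *)

theory Defs
  imports "HOL-Analysis.Analysis"
begin

definition f_AC :: "real \<Rightarrow> real" where
  "f_AC u = u ^ 3 - u"

definition midpoint_scheme :: "real \<Rightarrow> real \<Rightarrow> (nat \<Rightarrow> real) \<Rightarrow> bool" where
  "midpoint_scheme \<epsilon> h u \<longleftrightarrow>
     (\<forall>n\<ge>1. (u n - u (n - 1)) / h + (1 / \<epsilon>^2) * f_AC ((u n + u (n - 1)) / 2) = 0)"

definition h_star :: "real \<Rightarrow> real \<Rightarrow> real" where
  "h_star u0 \<epsilon> = (if \<bar>u0\<bar> > 1 then 8 * \<epsilon>^2 / (u0^2 + 4 * \<bar>u0\<bar> + 3) else \<epsilon>^2)"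

end

theory Submission
  imports Defs
begin

(* With k = h / epsilon^2 and the midpoint m = (u(n-1) + u(n)) / 2, a step of the scheme reads
   2 m + k f(m) = 2 u(n-1).  For k <= 2 the left-hand side is strictly increasing in m.  Comparing
   it at m = u(n-1) shows that u(n) - u(n-1) has the sign of -f(u(n-1)); comparing it at
   m = (u(n-1) + 1) / 2 shows that u(n) < 1 iff (1 - u(n-1)) (8 - k (u(n-1) + 1) (u(n-1) + 3)) > 0.
   The bound h <= h* keeps the second factor nonnegative along the orbit, so an orbit starting in
   (0, 1) increases and one starting above 1 decreases, without crossing 1.  A bounded monotone
   orbit converges to a positive zero of f, i.e. to 1; negative initial values reduce to positive
   ones by the symmetry u -> -u. *)

lemma f_AC_minus: "f_AC (- x) = - f_AC x"
  by (simp add: f_AC_def)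

lemma f_AC_eq_0_iff: "f_AC x = 0 \<longleftrightarrow> x \<in> {0, 1, -1}"
proof -
  have "f_AC x = x * (x - 1) * (x + 1)"
    by (simp add: f_AC_def algebra_simps power3_eq_cube)
  then show ?thesis by auto
qed

definition midpoint_step :: "real \<Rightarrow> real \<Rightarrow> real \<Rightarrow> bool" where
  "midpoint_step k a b \<longleftrightarrow> b - a + k * f_AC ((a + b) / 2) = 0"

definition midpoint_map :: "real \<Rightarrow> real \<Rightarrow> real" where
  "midpoint_map k m = 2 * m + k * f_AC m"

lemma midpoint_scheme_step:
  assumes "midpoint_scheme \<epsilon> h u" "h \<noteq> 0"
  shows "midpoint_step (h / \<epsilon>^2) (u n) (u (Suc n))"
proof -
  have "(u (Suc n) - u n) / h + (1 / \<epsilon>^2) * f_AC ((u (Suc n) + u n) / 2) = 0"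
    using assms(1) unfolding midpoint_scheme_def by (metis diff_Suc_1 le_add1 plus_1_eq_Suc)
  then have "h * ((u (Suc n) - u n) / h + (1 / \<epsilon>^2) * f_AC ((u n + u (Suc n)) / 2)) = 0"
    by (simp add: add.commute)
  then show ?thesis
    using assms(2) by (simp add: midpoint_step_def distrib_left)
qed

lemma midpoint_scheme_uminus:
  assumes "midpoint_scheme \<epsilon> h u"
  shows "midpoint_scheme \<epsilon> h (\<lambda>n. - u n)"
proof -
  have minus_residual: "(- u n - - u (n - 1)) / h + 1 / \<epsilon>^2 * f_AC ((- u n + - u (n - 1)) / 2)
      = - ((u n - u (n - 1)) / h + 1 / \<epsilon>^2 * f_AC ((u n + u (n - 1)) / 2))" for n
  proof -
    have "(- u n + - u (n - 1)) / 2 = - ((u n + u (n - 1)) / 2)"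
      by (simp only: minus_add_distrib[symmetric] minus_divide_left)
    then show ?thesis
      by (simp only: f_AC_minus) (simp add: diff_divide_distrib)
  qed
  show ?thesis
    using assms unfolding midpoint_scheme_def minus_residual neg_equal_0_iff_equal .
qed

lemma midpoint_step_iff: "midpoint_step k a b \<longleftrightarrow> midpoint_map k ((a + b) / 2) = 2 * a"
proof -
  have "2 * ((a + b) / 2) = a + b"
    by simp
  then show ?thesis
    unfolding midpoint_step_def midpoint_map_def by (intro iffI) linarith+
qed

lemma strict_mono_midpoint_map:
  assumes "0 \<le> k" "k \<le> 2"
  shows "strict_mono (midpoint_map k)"
proof (rule strict_monoI)
  fix x y :: real
  assume "x < y"
  then have "0 < x^2 + y^2"
    by (auto simp: sum_power2_gt_zero_iff)
  then have "0 < (x + y)^2 + (x^2 + y^2)"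
    by (simp add: add_nonneg_pos)
  moreover have "(x + y)^2 + (x^2 + y^2) = 2 * (x^2 + x * y + y^2)"
    by (simp add: algebra_simps power2_eq_square)
  ultimately have "0 < x^2 + x * y + y^2"
    by simp
  then have slope: "0 < (2 - k) + k * (x^2 + x * y + y^2)"
    using assms by (cases "k = 2") (auto intro: add_pos_nonneg)
  have "midpoint_map k y - midpoint_map k x = (y - x) * ((2 - k) + k * (x^2 + x * y + y^2))"
    by (simp add: midpoint_map_def f_AC_def algebra_simps power2_eq_square power3_eq_cube)
  also have "\<dots> > 0"
    using slope \<open>x < y\<close> by simp
  finally show "midpoint_map k x < midpoint_map k y"
    by simp
qed

lemma sgn_diff_strict_mono:
  fixes g :: "real \<Rightarrow> real"
  assumes "strict_mono g"
  shows "sgn (g x - g y) = sgn (x - y)"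
  using assms by (cases x y rule: linorder_cases) (auto simp: strict_mono_less)

lemma midpoint_step_sgn:
  assumes "midpoint_step k a b" "0 < k" "k \<le> 2"
  shows "sgn (b - a) = - sgn (f_AC a)"
proof -
  have mono: "strict_mono (midpoint_map k)"
    using assms(2,3) by (simp add: strict_mono_midpoint_map)
  define m where "m = (a + b) / 2"
  have "sgn (b - a) = sgn (m - a)"
    by (simp add: m_def sgn_if)
  also have "\<dots> = sgn (midpoint_map k m - midpoint_map k a)"
    using sgn_diff_strict_mono[OF mono] by simp
  also have "midpoint_map k m = 2 * a"
    using assms(1) by (simp add: midpoint_step_iff m_def)
  also have "sgn (2 * a - midpoint_map k a) = sgn (- k * f_AC a)"
    by (simp add: midpoint_map_def)
  also have "\<dots> = - sgn (f_AC a)"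
    using assms(2) by (simp add: sgn_mult)
  finally show ?thesis .
qed

lemma midpoint_step_less_one_iff:
  assumes "midpoint_step k a b" "0 < k" "k \<le> 2"
  shows "b < 1 \<longleftrightarrow> 0 < (1 - a) * (8 - k * (a + 1) * (a + 3))"
proof -
  have mono: "strict_mono (midpoint_map k)"
    using assms(2,3) by (simp add: strict_mono_midpoint_map)
  have "b < 1 \<longleftrightarrow> (a + b) / 2 < (a + 1) / 2"
    by simp
  also have "\<dots> \<longleftrightarrow> midpoint_map k ((a + b) / 2) < midpoint_map k ((a + 1) / 2)"
    using strict_mono_less[OF mono] by simp
  also have "midpoint_map k ((a + b) / 2) = 2 * a"
    using assms(1) by (simp add: midpoint_step_iff)
  also have "midpoint_map k ((a + 1) / 2) = 2 * a + (1 - a) * (8 - k * (a + 1) * (a + 3)) / 8"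
    by (simp add: midpoint_map_def f_AC_def field_simps power3_eq_cube)
  finally show ?thesis
    by simp
qed

lemma midpoint_step_in_unit_interval:
  assumes "midpoint_step k a b" "0 < k" "k \<le> 1" "0 < a" "a < 1"
  shows "a < b \<and> b < 1"
proof
  have "a^2 < 1"
    using assms(4,5) by (simp add: abs_square_less_1)
  then have "f_AC a < 0"
    using assms(4) by (simp add: f_AC_def power3_eq_cube power2_eq_square mult_pos_neg)
  then show "a < b"
    using midpoint_step_sgn[OF assms(1,2)] assms(3) by (simp add: sgn_1_pos)
  have "(a + 1) * (a + 3) < 2 * 4"
    using assms(4,5) by (intro mult_strict_mono) auto
  moreover have "k * ((a + 1) * (a + 3)) \<le> 1 * ((a + 1) * (a + 3))"
    using assms(3,4) by (intro mult_right_mono) auto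
  ultimately have "0 < (1 - a) * (8 - k * (a + 1) * (a + 3))"
    using assms(5) by (simp add: mult.assoc)
  then show "b < 1"
    using midpoint_step_less_one_iff[OF assms(1,2)] assms(3) by simp
qed

lemma midpoint_step_above_one:
  assumes "midpoint_step k a b" "0 < k" "1 \<le> a" "k * (a + 1) * (a + 3) \<le> 8"
  shows "1 \<le> b \<and> b \<le> a"
proof
  have "2 * 4 \<le> (a + 1) * (a + 3)"
    using assms(3) by (intro mult_mono) auto
  then have "k * 8 \<le> k * ((a + 1) * (a + 3))"
    using assms(2) by simp
  then have "k \<le> 1"
    using assms(4) by (simp add: mult.assoc)
  have "1 \<le> a^2"
    using assms(3) by simp
  then have "0 \<le> f_AC a"
    using assms(3) by (simp add: f_AC_def power3_eq_cube power2_eq_square)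
  then show "b \<le> a"
    using midpoint_step_sgn[OF assms(1,2)] \<open>k \<le> 1\<close>
    by (cases "f_AC a = 0") (auto simp: sgn_1_neg sgn_0_0)
  have "(1 - a) * (8 - k * (a + 1) * (a + 3)) \<le> 0"
    using assms(3,4) by (intro mult_nonpos_nonneg) auto
  then show "1 \<le> b"
    using midpoint_step_less_one_iff[OF assms(1,2)] \<open>k \<le> 1\<close> by simp
qed

lemma midpoint_limit_root:
  assumes "u \<longlonglongrightarrow> L" "\<And>n. midpoint_step k (u n) (u (Suc n))" "k \<noteq> 0"
  shows "f_AC L = 0"
proof -
  have "(\<lambda>n. u (Suc n) - u n + k * f_AC ((u n + u (Suc n)) / 2))
      \<longlonglongrightarrow> L - L + k * f_AC ((L + L) / 2)"
    unfolding f_AC_def using LIMSEQ_Suc[OF assms(1)] assms(1) by (intro tendsto_intros) auto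
  then have "k * f_AC L = 0"
    using assms(2) by (simp add: midpoint_step_def LIMSEQ_const_iff)
  then show ?thesis
    using assms(3) by simp
qed

lemma midpoint_orbit_fixed:
  assumes "\<And>n. midpoint_step k (u n) (u (Suc n))" "0 < k" "k \<le> 2" "f_AC (u 0) = 0"
  shows "u n = u 0"
proof (induction n)
  case (Suc n)
  then have "sgn (u (Suc n) - u n) = 0"
    using midpoint_step_sgn[OF assms(1,2,3), of n] assms(4) by simp
  with Suc show ?case
    by (simp add: sgn_0_0)
qed simp

lemma midpoint_orbit_below_one:
  assumes "\<And>n. midpoint_step k (u n) (u (Suc n))" "0 < k" "k \<le> 1" "0 < u 0" "u 0 < 1"
  shows "incseq u \<and> (\<forall>n. u 0 \<le> u n \<and> u n \<le> 1)"
proof -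
  note step = midpoint_step_in_unit_interval[OF assms(1) assms(2,3)]
  have bounds: "0 < u n \<and> u n < 1" for n
  proof (induction n)
    case (Suc n)
    then have "u n < u (Suc n) \<and> u (Suc n) < 1"
      using step by blast
    with Suc show ?case
      by simp
  qed (use assms in simp)
  have "incseq u"
  proof (rule incseq_SucI)
    show "u n \<le> u (Suc n)" for n
      using step[of n] bounds[of n] by simp
  qed
  then show ?thesis
    using bounds monoD[OF \<open>incseq u\<close>, of 0] by (simp add: less_imp_le)
qed

lemma midpoint_orbit_above_one:
  assumes "\<And>n. midpoint_step k (u n) (u (Suc n))" "0 < k" "1 \<le> u 0"
    "k * (u 0 + 1) * (u 0 + 3) \<le> 8"
  shows "decseq u \<and> (\<forall>n. 1 \<le> u n \<and> u n \<le> u 0)"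
proof -
  have step: "1 \<le> u (Suc n) \<and> u (Suc n) \<le> u n" if "1 \<le> u n" "u n \<le> u 0" for n
  proof -
    have "(u n + 1) * (u n + 3) \<le> (u 0 + 1) * (u 0 + 3)"
      using that by (intro mult_mono) auto
    then have "k * ((u n + 1) * (u n + 3)) \<le> k * ((u 0 + 1) * (u 0 + 3))"
      using assms(2) by simp
    then have "k * (u n + 1) * (u n + 3) \<le> 8"
      using assms(4) by (simp add: mult.assoc)
    then show ?thesis
      using midpoint_step_above_one[OF assms(1) assms(2) that(1)] by blast
  qed
  have bounds: "1 \<le> u n \<and> u n \<le> u 0" for n
  proof (induction n)
    case (Suc n)
    then show ?case
      using step[of n] by simp
  qed (use assms in simp)
  have "decseq u"
  proof (rule decseq_SucI)
    show "u (Suc n) \<le> u n" for n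
      using step[of n] bounds[of n] by simp
  qed
  with bounds show ?thesis
    by simp
qed

lemma midpoint_orbit_tendsto_one:
  assumes "\<And>n. midpoint_step k (u n) (u (Suc n))" "k \<noteq> 0" "monoseq u"
    "\<And>n. c \<le> u n \<and> u n \<le> d" "0 < c"
  shows "u \<longlonglongrightarrow> 1"
proof -
  have "Bseq u"
    using assms(4) by (intro Limits.Bseq_eq_bounded[of _ c d]) auto
  then obtain L where L: "u \<longlonglongrightarrow> L"
    using Bseq_monoseq_convergent assms(3) convergent_def by blast
  have "c \<le> L"
    using LIMSEQ_le_const[OF L] assms(4) by blast
  moreover have "f_AC L = 0"
    using midpoint_limit_root[OF L assms(1,2)] .
  ultimately have "L = 1"
    using assms(5) by (auto simp: f_AC_eq_0_iff)
  with L show ?thesis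
    by simp
qed

lemma midpoint_scheme_tendsto_one:
  assumes "0 < \<epsilon>" "0 < u0" "u0 \<noteq> 1" "0 < h" "h \<le> h_star u0 \<epsilon>"
    "u 0 = u0" "midpoint_scheme \<epsilon> h u"
  shows "monoseq u \<and> u \<longlonglongrightarrow> 1"
proof -
  define k where "k = h / \<epsilon>^2"
  have "0 < k"
    using assms(1,4) by (simp add: k_def)
  have steps: "\<And>n. midpoint_step k (u n) (u (Suc n))"
    using midpoint_scheme_step[OF assms(7)] assms(4) by (simp add: k_def)
  have "k \<noteq> 0"
    using \<open>0 < k\<close> by simp
  show ?thesis
  proof (cases "u0 < 1")
    case True
    then have "k \<le> 1"
      using assms by (simp add: k_def h_star_def)
    then have "incseq u" "\<And>n. u0 \<le> u n \<and> u n \<le> 1"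
      using midpoint_orbit_below_one[where u = u, OF steps \<open>0 < k\<close>] True assms(2,6) by simp_all
    then show ?thesis
      using midpoint_orbit_tendsto_one[where u = u and c = u0 and d = 1, OF steps \<open>k \<noteq> 0\<close>] assms(2)
      by (simp add: monoseq_iff)
  next
    case False
    then have "1 < u0"
      using assms(3) by simp
    then have "h_star u0 \<epsilon> = 8 * \<epsilon>^2 / ((u0 + 1) * (u0 + 3))"
      by (simp add: h_star_def algebra_simps power2_eq_square)
    then have "h * ((u0 + 1) * (u0 + 3)) \<le> 8 * \<epsilon>^2"
      using assms(5) \<open>1 < u0\<close> by (simp add: le_divide_eq)
    then have "k * (u0 + 1) * (u0 + 3) \<le> 8"
      using assms(1) by (simp add: k_def field_simps)
    then have "decseq u" "\<And>n. 1 \<le> u n \<and> u n \<le> u0"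
      using midpoint_orbit_above_one[where u = u, OF steps \<open>0 < k\<close>] \<open>1 < u0\<close> assms(6) by simp_all
    then show ?thesis
      using midpoint_orbit_tendsto_one[where u = u and c = 1 and d = u0, OF steps \<open>k \<noteq> 0\<close>]
      by (simp add: monoseq_iff)
  qed
qed

lemma midpoint_scheme_tendsto_sgn:
  assumes "0 < \<epsilon>" "u0 \<notin> {0, 1, -1}" "0 < h" "h \<le> h_star u0 \<epsilon>"
    "u 0 = u0" "midpoint_scheme \<epsilon> h u"
  shows "monoseq u \<and> u \<longlonglongrightarrow> sgn u0"
proof (cases "0 < u0")
  case True
  then show ?thesis
    using midpoint_scheme_tendsto_one[OF assms(1) True _ assms(3-6)] assms(2) by simp
next
  case False
  then have "0 < - u0" "- u0 \<noteq> 1" "h \<le> h_star (- u0) \<epsilon>"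
    using assms(2,4) by (auto simp: h_star_def)
  from midpoint_scheme_tendsto_one[OF assms(1) this(1,2) assms(3) this(3) _
      midpoint_scheme_uminus[OF assms(6)]]
  have "monoseq (\<lambda>n. - u n)" "(\<lambda>n. - u n) \<longlonglongrightarrow> 1"
    using assms(5) by simp_all
  then show ?thesis
    using monoseq_minus[of "\<lambda>n. - u n"] tendsto_minus_cancel_left[of u 1] \<open>0 < - u0\<close>
    by simp
qed

theorem theorem3p7:
  fixes \<epsilon> u0 :: real
  assumes "0 < \<epsilon>" and "\<epsilon> < 1"
  shows "(u0 \<in> {0, 1, -1} \<longrightarrow>
            (\<forall>h (u :: nat \<Rightarrow> real). 0 < h \<longrightarrow> h \<le> 2 * \<epsilon>^2 \<longrightarrow>
               u 0 = u0 \<longrightarrow> midpoint_scheme \<epsilon> h u \<longrightarrow> (\<forall>n\<ge>1. u n = sgn u0)))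
       \<and> (u0 \<notin> {0, 1, -1} \<longrightarrow>
            0 < h_star u0 \<epsilon> \<and>
            (\<forall>h (u :: nat \<Rightarrow> real). 0 < h \<longrightarrow> h \<le> h_star u0 \<epsilon> \<longrightarrow>
               u 0 = u0 \<longrightarrow> midpoint_scheme \<epsilon> h u \<longrightarrow>
               ((mono u \<or> antimono u) \<and> u \<longlonglongrightarrow> sgn u0)))"
proof (intro conjI impI allI)
  fix h :: real and u :: "nat \<Rightarrow> real" and n :: nat
  assume "u0 \<in> {0, 1, -1}" "0 < h" "h \<le> 2 * \<epsilon>^2" "u 0 = u0" "midpoint_scheme \<epsilon> h u"
  moreover have "u n = u 0"
  proof (rule midpoint_orbit_fixed)
    show "midpoint_step (h / \<epsilon>^2) (u m) (u (Suc m))" for m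
      using midpoint_scheme_step calculation by simp
  qed (use calculation assms(1) in \<open>simp_all add: f_AC_eq_0_iff pos_divide_le_eq\<close>)
  ultimately show "u n = sgn u0"
    by auto
next
  have "0 < u0^2 + 4 * \<bar>u0\<bar> + 3"
    by (simp add: add_nonneg_pos)
  then show "0 < h_star u0 \<epsilon>"
    using assms(1) by (simp add: h_star_def)
next
  fix h :: real and u :: "nat \<Rightarrow> real"
  assume "u0 \<notin> {0, 1, -1}" "0 < h" "h \<le> h_star u0 \<epsilon>" "u 0 = u0" "midpoint_scheme \<epsilon> h u"
  then have "monoseq u" "u \<longlonglongrightarrow> sgn u0"
    using midpoint_scheme_tendsto_sgn assms(1) by blast+
  then show "mono u \<or> antimono u" "u \<longlonglongrightarrow> sgn u0"
    by (simp_all add: monoseq_iff)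
qed

end
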